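(* Let $n\ge 2$ and let $f=(f_1,\dots,f_n):\mathbb{R}^n\to\mathbb{R}^n$. Then $f$ is a Laplacian map if and only if there exist a function $g\in C^2(\mathbb{R}^{n-1})$, with variables $(t_1,\dots,t_{n-1})$, and a constant $k\in\mathbb{R}$ such that \[ f_i(x_1,\dots,x_n)=\frac{\partial g}{\partial t_i}(x_1-x_n,\dots,x_{n-1}-x_n),\quad i=1,\dots,n-1, \] \[ f_n=-f_1-\dots-f_{n-1}+k. \]
   Context: A real $n\times n$ matrix $L=(l_{ij})$ is a Laplacian matrix if it is symmetric and $l_{ii}=-\sum_{j\neq i} l_{ij}$ for $i=1,\dots,n$. A map $f:\mathbb{R}^n\to\mathbb{R}^n$ of class $C^1$ is a Laplacian map if its Jacobian matrix $Jf(x)$ is a Laplacian matrix for every $x\in\mathbb{R}^n$. *)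

theory Defs
  imports "HOL-Analysis.Analysis"
begin

definition C1_map :: "('a::real_normed_vector \<Rightarrow> 'b::real_normed_vector) \<Rightarrow> bool" where
  "C1_map f \<longleftrightarrow> (\<exists>f'. (\<forall>x. (f has_derivative blinfun_apply (f' x)) (at x)) \<and> continuous_on UNIV f')"

definition C2_map :: "('a::real_normed_vector \<Rightarrow> 'b::real_normed_vector) \<Rightarrow> bool" where
  "C2_map f \<longleftrightarrow> (\<exists>f'. (\<forall>x. (f has_derivative blinfun_apply (f' x)) (at x)) \<and> C1_map f')"

definition laplacian_matrix :: "real^'n^'n \<Rightarrow> bool" where
  "laplacian_matrix L \<longleftrightarrow> transpose L = L \<and>
     (\<forall>i. L $ i $ i = - (\<Sum>j\<in>UNIV - {i}. L $ i $ j))"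

definition laplacian_map :: "(real^'n \<Rightarrow> real^'n) \<Rightarrow> bool" where
  "laplacian_map f \<longleftrightarrow> C1_map f \<and> (\<forall>x. laplacian_matrix (jacobian f (at x)))"

definition partial_deriv :: "(real^'m \<Rightarrow> real) \<Rightarrow> 'm \<Rightarrow> real^'m \<Rightarrow> real" where
  "partial_deriv g i y = deriv (\<lambda>t. g (y + t *\<^sub>R axis i 1)) 0"

end

theory Submission
  imports Defs
begin

(* The coordinate None plays the role of x_n. A Laplacian Jacobian is self-adjoint and
   annihilates the all-ones vector 1. Self-adjointness makes f a gradient field (Poincare
   lemma), while f' 1 = 0 makes f invariant under translation along 1 and makes the
   coordinate sum f . 1 constant; hence f is determined by its restriction to the hyperplane
   x_n = 0, whose first n - 1 components form the gradient of a C^2 potential g.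
   Conversely, f = k e_n + A^T (grad g)(A x) with A x = (x_i - x_n)_i has Jacobian
   A^T (D^2 g) A, which is symmetric by Schwarz's theorem and annihilates 1 since A 1 = 0. *)

lemma laplacian_matrix_iff:
  "laplacian_matrix L \<longleftrightarrow> transpose L = L \<and> L *v (\<chi> j. 1) = 0"
proof -
  have "L $ i $ i = - (\<Sum>j\<in>UNIV - {i}. L $ i $ j) \<longleftrightarrow> (\<Sum>j\<in>UNIV. L $ i $ j) = 0" for i
    using sum.remove[of UNIV i "\<lambda>j. L $ i $ j"] by auto
  moreover have "L *v (\<chi> j. 1) = 0 \<longleftrightarrow> (\<forall>i. (\<Sum>j\<in>UNIV. L $ i $ j) = 0)"
    by (simp add: matrix_vector_mult_def vec_eq_iff)
  ultimately show ?thesis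
    unfolding laplacian_matrix_def by simp
qed

lemma transpose_matrix_eq_iff_self_adjoint:
  fixes h :: "real^'n \<Rightarrow> real^'n"
  assumes "linear h"
  shows "transpose (matrix h) = matrix h \<longleftrightarrow> (\<forall>a b. h a \<bullet> b = a \<bullet> h b)"
proof -
  have "transpose (matrix h) = matrix h \<longleftrightarrow> adjoint h = h"
    using assms adjoint_linear matrix_adjoint matrix_vector_mul(2) by metis
  also have "\<dots> \<longleftrightarrow> (\<forall>a b. h a \<bullet> b = a \<bullet> h b)"
    using adjoint_unique adjoint_works[OF assms] by metis
  finally show ?thesis .
qed

lemma laplacian_jacobian_iff:
  fixes f :: "real^'n \<Rightarrow> real^'n"
  assumes "(f has_derivative D) (at x)"
  shows "laplacian_matrix (jacobian f (at x)) \<longleftrightarrow> (\<forall>a b. D a \<bullet> b = a \<bullet> D b) \<and> D (\<chi> j. 1) = 0"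
proof -
  have "linear D"
    using assms by (rule has_derivative_linear)
  moreover have "jacobian f (at x) = matrix D"
    using assms by (simp add: jacobian_def frechet_derivative_at[symmetric])
  ultimately show ?thesis
    by (simp add: laplacian_matrix_iff transpose_matrix_eq_iff_self_adjoint)
qed

lemma laplacian_map_iff:
  "laplacian_map f \<longleftrightarrow> (\<exists>f'. (\<forall>x. (f has_derivative blinfun_apply (f' x)) (at x)) \<and>
     continuous_on UNIV f' \<and> (\<forall>x a b. f' x a \<bullet> b = a \<bullet> f' x b) \<and> (\<forall>x. f' x (\<chi> j. 1) = 0))"
  unfolding laplacian_map_def C1_map_def using laplacian_jacobian_iff by metis

lemma partial_deriv_eq:
  assumes "(g has_derivative D) (at y)"
  shows "partial_deriv g i y = D (axis i 1)"
proof -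
  have "((\<lambda>t. y + t *\<^sub>R axis i 1) has_derivative (\<lambda>h. h *\<^sub>R axis i 1)) (at 0)"
    by (auto intro!: derivative_eq_intros)
  from has_derivative_compose[OF this, of g D] assms
  have "((\<lambda>t. g (y + t *\<^sub>R axis i 1)) has_real_derivative D (axis i 1)) (at 0)"
    using linear_cmul[OF has_derivative_linear[OF assms]]
    by (simp add: has_field_derivative_def mult.commute[of _ "D (axis i 1)"])
  then show ?thesis
    unfolding partial_deriv_def by (rule DERIV_imp_deriv)
qed

lemma C1_map_affine_compose:
  assumes L: "bounded_linear L" and A: "bounded_linear A"
    and dh: "\<And>x. (h has_derivative blinfun_apply (h' x)) (at x)" and ch': "continuous_on UNIV h'"
  shows "((\<lambda>x. c + L (h (A x))) has_derivative (\<lambda>v. L (h' (A x) (A v)))) (at x)"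
    and "C1_map (\<lambda>x. c + L (h (A x)))"
proof -
  have d: "((\<lambda>x. c + L (h (A x))) has_derivative (\<lambda>v. L (h' (A x) (A v)))) (at x)" for x
    using has_derivative_add[OF has_derivative_const bounded_linear.has_derivative[OF L
          has_derivative_compose[OF bounded_linear_imp_has_derivative[OF A] dh]]]
    by simp
  then show "((\<lambda>x. c + L (h (A x))) has_derivative (\<lambda>v. L (h' (A x) (A v)))) (at x)" .
  have "blinfun_apply (Blinfun L o\<^sub>L h' (A x) o\<^sub>L Blinfun A) = (\<lambda>v. L (h' (A x) (A v)))" for x
    using L A by (simp add: bounded_linear_Blinfun_apply fun_eq_iff)
  moreover have "continuous_on UNIV (\<lambda>x. Blinfun L o\<^sub>L h' (A x) o\<^sub>L Blinfun A)"
    by (intro continuous_intros continuous_on_compose2[OF ch'] linear_continuous_on A) auto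
  ultimately show "C1_map (\<lambda>x. c + L (h (A x)))"
    unfolding C1_map_def using d by (intro exI[of _ "\<lambda>x. Blinfun L o\<^sub>L h' (A x) o\<^sub>L Blinfun A"]) simp
qed

lemma C2_map_if_gradient_C1:
  fixes g :: "'a::real_inner \<Rightarrow> real"
  assumes dg: "\<And>y. (g has_derivative (\<lambda>v. F y \<bullet> v)) (at y)" and "C1_map F"
  shows "C2_map g"
proof -
  obtain F' where "\<And>x. (F has_derivative blinfun_apply (F' x)) (at x)" "continuous_on UNIV F'"
    using \<open>C1_map F\<close> unfolding C1_map_def by blast
  from C1_map_affine_compose(2)[OF bounded_linear_blinfun_inner_right bounded_linear_ident this, of 0]
  have "C1_map (\<lambda>y. blinfun_inner_right (F y))"
    by simp
  then show ?thesis
    unfolding C2_map_def using dg by (intro exI[of _ "\<lambda>y. blinfun_inner_right (F y)"]) simp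
qed

lemma second_difference_mvt:
  fixes g :: "'a::real_normed_vector \<Rightarrow> real"
  assumes dg: "\<And>y. (g has_derivative blinfun_apply (g' y)) (at y)"
    and dg': "\<And>y. (g' has_derivative blinfun_apply (g'' y)) (at y)"
    and t: "t > 0"
  shows "\<exists>z. norm (z - x) \<le> t * (norm u + norm v) \<and>
    g (x + t *\<^sub>R u + t *\<^sub>R v) - g (x + t *\<^sub>R u) - g (x + t *\<^sub>R v) + g x = t\<^sup>2 * g'' z v u"
proof -
  define \<psi> where "\<psi> s = g (x + s *\<^sub>R u + t *\<^sub>R v) - g (x + s *\<^sub>R u)" for s
  have "(\<psi> has_derivative (\<lambda>h. h * (g' (x + s *\<^sub>R u + t *\<^sub>R v) u - g' (x + s *\<^sub>R u) u)))
      (at s within {0..t})" for s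
  proof -
    have "((\<lambda>s. x + s *\<^sub>R u + t *\<^sub>R v) has_derivative (\<lambda>h. h *\<^sub>R u)) (at s within {0..t})"
      and "((\<lambda>s. x + s *\<^sub>R u) has_derivative (\<lambda>h. h *\<^sub>R u)) (at s within {0..t})"
      by (auto intro!: derivative_eq_intros)
    from has_derivative_diff[OF has_derivative_compose[OF this(1) dg] has_derivative_compose[OF this(2) dg]]
    show ?thesis
      unfolding \<psi>_def by (simp add: blinfun.scaleR_right right_diff_distrib)
  qed
  from mvt_simple[OF t this] obtain \<xi> where \<xi>: "0 < \<xi>" "\<xi> < t"
    and \<psi>_diff: "\<psi> t - \<psi> 0 = t * (g' (x + \<xi> *\<^sub>R u + t *\<^sub>R v) u - g' (x + \<xi> *\<^sub>R u) u)"
    by auto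
  define \<phi> where "\<phi> r = g' (x + \<xi> *\<^sub>R u + r *\<^sub>R v) u" for r
  have "(\<phi> has_derivative (\<lambda>h. h * g'' (x + \<xi> *\<^sub>R u + r *\<^sub>R v) v u)) (at r within {0..t})" for r
  proof -
    have "((\<lambda>r. x + \<xi> *\<^sub>R u + r *\<^sub>R v) has_derivative (\<lambda>h. h *\<^sub>R v)) (at r within {0..t})"
      by (auto intro!: derivative_eq_intros)
    from blinfun.FDERIV[OF has_derivative_compose[OF this dg'] has_derivative_const]
    show ?thesis
      unfolding \<phi>_def by (simp add: blinfun.scaleR_right blinfun.scaleR_left)
  qed
  from mvt_simple[OF t this] obtain \<eta> where \<eta>: "0 < \<eta>" "\<eta> < t"
    and \<phi>_diff: "\<phi> t - \<phi> 0 = t * g'' (x + \<xi> *\<^sub>R u + \<eta> *\<^sub>R v) v u"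
    by auto
  define z where "z = x + \<xi> *\<^sub>R u + \<eta> *\<^sub>R v"
  have "norm (z - x) \<le> \<xi> * norm u + \<eta> * norm v"
    using \<xi> \<eta> norm_triangle_ineq[of "\<xi> *\<^sub>R u" "\<eta> *\<^sub>R v"] by (simp add: z_def)
  also have "\<dots> \<le> t * (norm u + norm v)"
    using \<xi> \<eta> by (simp add: distrib_left add_mono mult_right_mono)
  finally have "norm (z - x) \<le> t * (norm u + norm v)" .
  moreover have "g (x + t *\<^sub>R u + t *\<^sub>R v) - g (x + t *\<^sub>R u) - g (x + t *\<^sub>R v) + g x = t\<^sup>2 * g'' z v u"
    using \<psi>_diff \<phi>_diff by (simp add: \<psi>_def \<phi>_def z_def power2_eq_square)
  ultimately show ?thesis by blast
qed

lemma second_derivative_symmetric: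
  fixes g :: "'a::real_normed_vector \<Rightarrow> real"
  assumes dg: "\<And>y. (g has_derivative blinfun_apply (g' y)) (at y)"
    and dg': "\<And>y. (g' has_derivative blinfun_apply (g'' y)) (at y)"
    and cg'': "continuous_on UNIV g''"
  shows "g'' x u v = g'' x v u"
proof -
  \<comment> \<open>The two mixed partials agree at pairs of points arbitrarily close to (x, x).\<close>
  let ?S = "{p. g'' (fst p) v u = g'' (snd p) u v}"
  have "closed ?S"
    by (intro closed_Collect_eq continuous_intros continuous_on_compose2[OF cg'']) auto
  moreover have "(x, x) \<in> closure ?S"
    unfolding closure_approachable
  proof (intro allI impI)
    fix e :: real
    assume "e > 0"
    define t where "t = e / (2 * (norm u + norm v + 1))"
    have "norm u + norm v + 1 > 0"
      by (simp add: add_nonneg_pos)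
    then have t: "t > 0" "2 * (t * (norm u + norm v)) < e"
      using \<open>e > 0\<close> by (auto simp: t_def field_simps)
    obtain z1 where z1: "norm (z1 - x) \<le> t * (norm u + norm v)"
      "g (x + t *\<^sub>R u + t *\<^sub>R v) - g (x + t *\<^sub>R u) - g (x + t *\<^sub>R v) + g x = t\<^sup>2 * g'' z1 v u"
      using second_difference_mvt[OF dg dg' t(1)] by blast
    obtain z2 where z2: "norm (z2 - x) \<le> t * (norm v + norm u)"
      "g (x + t *\<^sub>R v + t *\<^sub>R u) - g (x + t *\<^sub>R v) - g (x + t *\<^sub>R u) + g x = t\<^sup>2 * g'' z2 u v"
      using second_difference_mvt[OF dg dg' t(1)] by blast
    have "g'' z1 v u = g'' z2 u v"
      using z1(2) z2(2) t(1) by (simp add: algebra_simps)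
    moreover have "dist (z1, z2) (x, x) < e"
      using norm_Pair_le[of "z1 - x" "z2 - x"] z1(1) z2(1) t(2)
      unfolding dist_norm add.commute[of "norm v"] by simp
    ultimately show "\<exists>p\<in>?S. dist p (x, x) < e"
      by fastforce
  qed
  ultimately have "(x, x) \<in> ?S"
    by (simp add: closure_closed)
  then show ?thesis
    by simp
qed

lemma exists_C2_potential:
  fixes F :: "'a::euclidean_space \<Rightarrow> 'a"
  assumes "C1_map F" and dF_self_adjoint: "\<And>x. (F has_derivative D x) (at x)" "\<And>x u v. D x u \<bullet> v = u \<bullet> D x v"
  shows "\<exists>g. C2_map g \<and> (\<forall>y. (g has_derivative (\<lambda>v. F y \<bullet> v)) (at y))"
proof -
  obtain F' where dF: "\<And>x. (F has_derivative blinfun_apply (F' x)) (at x)" and cF': "continuous_on UNIV F'"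
    using \<open>C1_map F\<close> unfolding C1_map_def by blast
  have "blinfun_apply (F' x) = D x" for x
    using has_derivative_unique[OF dF dF_self_adjoint(1)] .
  then have sym: "F' x u \<bullet> v = u \<bullet> F' x v" for x u v
    using dF_self_adjoint(2) by simp
  \<comment> \<open>By self-adjointness the integrand of the derivative is d/ds (s F(s y) . v).\<close>
  define g where "g y = integral (cbox 0 1) (\<lambda>s::real. F (s *\<^sub>R y) \<bullet> y)" for y
  define G where "G y s = s *\<^sub>R (blinfun_inner_left y o\<^sub>L F' (s *\<^sub>R y))
      + blinfun_inner_right (F (s *\<^sub>R y))" for y and s :: real
  have G_apply: "G y s v = s * (F' (s *\<^sub>R y) v \<bullet> y) + F (s *\<^sub>R y) \<bullet> v" for y s v
    by (simp add: G_def blinfun.add_left blinfun.scaleR_left)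
  have cF: "continuous_on UNIV F"
    using dF has_derivative_continuous continuous_at_imp_continuous_on by blast
  have dF_scaled: "((\<lambda>y. F (s *\<^sub>R y)) has_derivative (\<lambda>h. s *\<^sub>R F' (s *\<^sub>R y) h)) (at y)" for s y
    using has_derivative_compose[OF has_derivative_scaleR_right[OF has_derivative_ident] dF, of s y]
    by (simp add: blinfun.scaleR_right)
  have dG: "((\<lambda>y. F (s *\<^sub>R y) \<bullet> y) has_derivative G y s) (at y within UNIV)" for y s
    unfolding G_apply
    by (auto intro!: derivative_eq_intros dF_scaled ext simp: algebra_simps)
  have "continuous_on (UNIV \<times> cbox 0 1) (\<lambda>(y, s). G y s)"
    unfolding G_def case_prod_beta
    by (intro continuous_intros continuous_on_compose2[OF cF'] continuous_on_compose2[OF cF]) auto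
  then have dg: "(g has_derivative integral (cbox 0 1) (G y)) (at y)" for y
    unfolding g_def
    by (intro leibniz_rule[where U=UNIV, simplified] dG integrable_continuous
        continuous_intros continuous_on_compose2[OF cF]) auto
  have "integral (cbox 0 1) (G y) v = F y \<bullet> v" for y v
  proof -
    have "((\<lambda>s. s * (F (s *\<^sub>R y) \<bullet> v)) has_vector_derivative G y s v) (at s)" for s
    proof -
      have "((\<lambda>s. F (s *\<^sub>R y)) has_derivative (\<lambda>h. h *\<^sub>R F' (s *\<^sub>R y) y)) (at s)"
        using has_derivative_compose[OF has_derivative_scaleR_left[OF has_derivative_ident] dF, of y s]
        by (simp add: blinfun.scaleR_right)
      then have "((\<lambda>s. s * (F (s *\<^sub>R y) \<bullet> v)) has_derivative
          (\<lambda>h. s * (h *\<^sub>R F' (s *\<^sub>R y) y \<bullet> v) + h * (F (s *\<^sub>R y) \<bullet> v))) (at s)"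
        by (rule has_derivative_mult[OF has_derivative_ident has_derivative_inner_left])
      moreover have "F' (s *\<^sub>R y) y \<bullet> v = F' (s *\<^sub>R y) v \<bullet> y"
        by (metis sym inner_commute)
      ultimately show ?thesis
        unfolding G_apply has_vector_derivative_def by (simp add: algebra_simps)
    qed
    then have "((\<lambda>s. G y s v) has_integral F y \<bullet> v) {0..1}"
      using fundamental_theorem_of_calculus[of 0 1] has_vector_derivative_at_within by fastforce
    moreover have "(\<lambda>s. G y s) integrable_on cbox 0 1"
      unfolding G_def
      by (intro integrable_continuous continuous_intros continuous_on_compose2[OF cF']
          continuous_on_compose2[OF cF]) auto
    ultimately show ?thesis
      by (simp add: blinfun_apply_integral integral_unique)
  qed
  then have "(g has_derivative (\<lambda>v. F y \<bullet> v)) (at y)" for y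
    using dg by (metis ext)
  with C2_map_if_gradient_C1[OF _ \<open>C1_map F\<close>] show ?thesis
    by blast
qed

lemma derivative_vanishing_imp_translation_invariant:
  fixes f :: "'a::real_normed_vector \<Rightarrow> 'b::real_normed_vector"
  assumes df: "\<And>x. (f has_derivative D x) (at x)" and ker: "\<And>x. D x u = 0"
  shows "f (x + t *\<^sub>R u) = f x"
proof -
  have "((\<lambda>t. f (x + t *\<^sub>R u)) has_derivative (\<lambda>h. 0)) (at s within UNIV)" for s
  proof -
    have "((\<lambda>t. x + t *\<^sub>R u) has_derivative (\<lambda>h. h *\<^sub>R u)) (at s)"
      by (auto intro!: derivative_eq_intros)
    from has_derivative_compose[OF this df]
    show ?thesis
      using linear_cmul[OF has_derivative_linear[OF df]] by (simp add: ker)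
  qed
  then obtain c where "\<forall>t\<in>UNIV. f (x + t *\<^sub>R u) = c"
    using has_derivative_zero_constant[of UNIV] by blast
  then show ?thesis
    by (metis UNIV_I add_0_right scale_zero_left)
qed

lemma self_adjoint_derivative_imp_inner_constant:
  fixes f :: "'a::real_inner \<Rightarrow> 'a"
  assumes df: "\<And>x. (f has_derivative D x) (at x)"
    and sym: "\<And>x a b. D x a \<bullet> b = a \<bullet> D x b" and ker: "\<And>x. D x u = 0"
  shows "f x \<bullet> u = f y \<bullet> u"
proof -
  have "((\<lambda>x. f x \<bullet> u) has_derivative (\<lambda>h. 0)) (at x within UNIV)" for x
  proof -
    have "((\<lambda>x. f x \<bullet> u) has_derivative (\<lambda>h. D x h \<bullet> u)) (at x)"
      by (rule has_derivative_inner_left[OF df])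
    then show ?thesis
      by (simp add: sym ker)
  qed
  then obtain c where "\<forall>x\<in>UNIV. f x \<bullet> u = c"
    using has_derivative_zero_constant[of UNIV] by blast
  then show ?thesis
    by simp
qed

definition diff_coords :: "real^('m option) \<Rightarrow> real^'m" where
  "diff_coords x = (\<chi> j. x $ Some j - x $ None)"

definition zero_extend :: "real^'m \<Rightarrow> real^('m option)" where
  "zero_extend y = (\<chi> p. case p of None \<Rightarrow> 0 | Some j \<Rightarrow> y $ j)"

definition diff_coords_dual :: "((real^'m) \<Rightarrow>\<^sub>L real) \<Rightarrow> real^('m option)" where
  "diff_coords_dual L = (\<Sum>p\<in>UNIV. L (diff_coords (axis p 1)) *\<^sub>R axis p 1)"

lemma bounded_linear_diff_coords: "bounded_linear diff_coords"
  by (auto intro!: linearI simp: linear_conv_bounded_linear[symmetric] diff_coords_def vec_eq_iff algebra_simps)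

lemma bounded_linear_zero_extend: "bounded_linear zero_extend"
  by (auto intro!: linearI simp: linear_conv_bounded_linear[symmetric] zero_extend_def vec_eq_iff
      split: option.splits)

lemma bounded_linear_diff_coords_dual: "bounded_linear diff_coords_dual"
  unfolding diff_coords_dual_def
  by (intro bounded_linear_sum bounded_linear_compose[OF bounded_linear_scaleR_left blinfun.bounded_linear_left])

lemma diff_coords_one [simp]: "diff_coords (\<chi> j. 1) = 0"
  by (simp add: diff_coords_def vec_eq_iff)

lemma zero_extend_axis [simp]: "zero_extend (axis i 1) = axis (Some i) 1"
  by (simp add: zero_extend_def vec_eq_iff axis_def split: option.splits)

lemma zero_extend_diff_coords: "zero_extend (diff_coords x) + x $ None *\<^sub>R (\<chi> j. 1) = x"
  by (simp add: diff_coords_def zero_extend_def vec_eq_iff split: option.splits)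

lemma diff_coords_dual_nth: "diff_coords_dual L $ p = L (diff_coords (axis p 1))"
  by (simp add: diff_coords_dual_def axis_def if_distrib cong: if_cong)

lemma diff_coords_dual_nth_Some [simp]: "diff_coords_dual L $ Some i = L (axis i 1)"
proof -
  have "diff_coords (axis (Some i) 1) = axis i 1"
    by (simp add: diff_coords_def vec_eq_iff axis_def)
  then show ?thesis
    by (simp add: diff_coords_dual_nth)
qed

lemma diff_coords_dual_nth_None [simp]: "diff_coords_dual L $ None = - (\<Sum>i\<in>UNIV. L (axis i 1))"
proof -
  have A: "diff_coords (axis None 1) = - (\<Sum>i\<in>UNIV. axis i 1)"
    by (simp add: diff_coords_def vec_eq_iff axis_def)
  show ?thesis
    by (simp add: diff_coords_dual_nth A blinfun.minus_right blinfun.sum_right)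
qed

lemma inner_diff_coords_dual: "diff_coords_dual L \<bullet> h = L (diff_coords h)"
proof -
  have "diff_coords_dual L \<bullet> h = (\<Sum>p\<in>UNIV. h $ p * L (diff_coords (axis p 1)))"
    by (simp add: inner_vec_def diff_coords_dual_nth mult.commute)
  also have "\<dots> = L (diff_coords (\<Sum>p\<in>UNIV. h $ p *\<^sub>R axis p 1))"
    by (simp add: linear_sum[OF bounded_linear.linear[OF bounded_linear_diff_coords]]
        linear_cmul[OF bounded_linear.linear[OF bounded_linear_diff_coords]]
        blinfun.sum_right blinfun.scaleR_right)
  also have "(\<Sum>p\<in>UNIV. h $ p *\<^sub>R axis p 1) = h"
    using basis_expansion[of h] by (simp add: scalar_mult_eq_scaleR)
  finally show ?thesis .
qed

lemma sum_UNIV_option: "(\<Sum>p\<in>UNIV. h p) = h None + (\<Sum>i\<in>UNIV. h (Some i))"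
  for h :: "'m::finite option \<Rightarrow> real"
  by (simp add: UNIV_option_conv sum.reindex)

lemma laplacian_map_translation_invariant:
  assumes "laplacian_map f"
  shows "f (x + t *\<^sub>R (\<chi> j. 1)) = f x"
proof -
  obtain f' where "\<And>x. (f has_derivative blinfun_apply (f' x)) (at x)" "\<And>x. f' x (\<chi> j. 1) = 0"
    using assms unfolding laplacian_map_iff by blast
  then show ?thesis
    by (rule derivative_vanishing_imp_translation_invariant)
qed

lemma laplacian_map_sum_constant:
  assumes "laplacian_map f"
  shows "(\<Sum>p\<in>UNIV. f x $ p) = (\<Sum>p\<in>UNIV. f y $ p)"
proof -
  obtain f' where "\<And>x. (f has_derivative blinfun_apply (f' x)) (at x)"
    "\<And>x a b. f' x a \<bullet> b = a \<bullet> f' x b" "\<And>x. f' x (\<chi> j. 1) = 0"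
    using assms unfolding laplacian_map_iff by blast
  from self_adjoint_derivative_imp_inner_constant[OF this]
  show ?thesis
    by (simp add: inner_vec_def)
qed

lemma laplacian_map_imp_potential:
  fixes f :: "real^('m::finite option) \<Rightarrow> real^('m option)"
  assumes "laplacian_map f"
  shows "\<exists>g. C2_map g \<and> (\<forall>y i. partial_deriv g i y = f (zero_extend y) $ Some i)"
proof -
  obtain f' where df: "\<And>x. (f has_derivative blinfun_apply (f' x)) (at x)"
    and cf': "continuous_on UNIV f'" and sym: "\<And>x a b. f' x a \<bullet> b = a \<bullet> f' x b"
    using assms unfolding laplacian_map_iff by blast
  \<comment> \<open>R drops the coordinate None.\<close>
  define R where "R = adjoint (zero_extend :: real^'m \<Rightarrow> _)"
  have R: "bounded_linear R" "\<And>y z. R z \<bullet> y = z \<bullet> zero_extend y"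
    using adjoint_linear adjoint_clauses(2) bounded_linear_zero_extend
    unfolding R_def linear_conv_bounded_linear by blast+
  define F where "F y = R (f (zero_extend y))" for y
  from C1_map_affine_compose[OF R(1) bounded_linear_zero_extend df cf', of 0]
  have dF: "(F has_derivative (\<lambda>v. R (f' (zero_extend y) (zero_extend v)))) (at y)"
    and "C1_map F" for y
    by (simp_all add: F_def[abs_def])
  moreover have "R (f' (zero_extend y) (zero_extend a)) \<bullet> b = a \<bullet> R (f' (zero_extend y) (zero_extend b))"
    for y a b
    by (metis R(2) sym inner_commute)
  ultimately obtain g where "C2_map g" and dg: "\<And>y. (g has_derivative (\<lambda>v. F y \<bullet> v)) (at y)"
    using exists_C2_potential[of F "\<lambda>y v. R (f' (zero_extend y) (zero_extend v))"] by blast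
  moreover have "partial_deriv g i y = f (zero_extend y) $ Some i" for y i
    using partial_deriv_eq[OF dg] R(2)[where y="axis i 1"] by (simp add: F_def inner_axis)
  ultimately show ?thesis
    by blast
qed

lemma laplacian_map_if_potential:
  fixes f :: "real^('m::finite option) \<Rightarrow> real^('m option)"
  assumes "C2_map g"
    and f_Some: "\<And>x i. f x $ Some i = partial_deriv g i (diff_coords x)"
    and f_None: "\<And>x. f x $ None = - (\<Sum>i\<in>UNIV. f x $ Some i) + k"
  shows "laplacian_map f"
proof -
  obtain g' g'' where dg: "\<And>y. (g has_derivative blinfun_apply (g' y)) (at y)"
    and dg': "\<And>y. (g' has_derivative blinfun_apply (g'' y)) (at y)" and cg'': "continuous_on UNIV g''"
    using assms(1) unfolding C2_map_def C1_map_def by blast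
  have "f x $ p = (k *\<^sub>R axis None 1 + diff_coords_dual (g' (diff_coords x))) $ p" for x p
    by (cases p) (simp_all add: f_None f_Some partial_deriv_eq[OF dg] axis_def)
  then have f_eq: "f = (\<lambda>x. k *\<^sub>R axis None 1 + diff_coords_dual (g' (diff_coords x)))"
    by (simp add: fun_eq_iff vec_eq_iff)
  note f_C1 = C1_map_affine_compose[OF bounded_linear_diff_coords_dual bounded_linear_diff_coords dg' cg'',
      of "k *\<^sub>R axis None 1", folded f_eq]
  have "laplacian_matrix (jacobian f (at x))" for x
    unfolding laplacian_jacobian_iff[OF f_C1(1)]
    using second_derivative_symmetric[OF dg dg' cg'']
    by (simp add: inner_diff_coords_dual inner_commute[of _ "diff_coords_dual _"]
        linear_0[OF bounded_linear.linear[OF bounded_linear_diff_coords_dual]])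
  with f_C1(2) show ?thesis
    unfolding laplacian_map_def by blast
qed

theorem theorem4p2:
  fixes f :: "real^('m::finite option) \<Rightarrow> real^('m option)"
  shows "laplacian_map f \<longleftrightarrow>
    (\<exists>(g :: real^'m \<Rightarrow> real) (k :: real). C2_map g \<and>
       (\<forall>x i. f x $ Some i = partial_deriv g i (\<chi> j. x $ Some j - x $ None)) \<and>
       (\<forall>x. f x $ None = - (\<Sum>i\<in>UNIV. f x $ Some i) + k))"
proof
  assume L: "laplacian_map f"
  obtain g where "C2_map g" and g: "\<And>y i. partial_deriv g i y = f (zero_extend y) $ Some i"
    using laplacian_map_imp_potential[OF L] by blast
  have "f x $ Some i = partial_deriv g i (diff_coords x)" for x i
    using laplacian_map_translation_invariant[OF L, of "zero_extend (diff_coords x)" "x $ None"]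
    by (simp add: g zero_extend_diff_coords)
  moreover have "f x $ None = - (\<Sum>i\<in>UNIV. f x $ Some i) + (\<Sum>p\<in>UNIV. f 0 $ p)" for x
    using laplacian_map_sum_constant[OF L, of x 0] unfolding sum_UNIV_option[of "($) (f x)"] by linarith
  ultimately show "\<exists>g k. C2_map g \<and>
       (\<forall>x i. f x $ Some i = partial_deriv g i (\<chi> j. x $ Some j - x $ None)) \<and>
       (\<forall>x. f x $ None = - (\<Sum>i\<in>UNIV. f x $ Some i) + k)"
    using \<open>C2_map g\<close> unfolding diff_coords_def by (intro exI conjI allI)
next
  assume "\<exists>g k. C2_map g \<and>
       (\<forall>x i. f x $ Some i = partial_deriv g i (\<chi> j. x $ Some j - x $ None)) \<and>
       (\<forall>x. f x $ None = - (\<Sum>i\<in>UNIV. f x $ Some i) + k)"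
  then obtain g k where "C2_map g"
    and "\<And>x i. f x $ Some i = partial_deriv g i (diff_coords x)"
    and "\<And>x. f x $ None = - (\<Sum>i\<in>UNIV. f x $ Some i) + k"
    unfolding diff_coords_def by blast
  then show "laplacian_map f"
    by (rule laplacian_map_if_potential)
qed

end
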